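(* There exists a cellular automaton $(A^{\mathbb{Z}},T)$ (over some finite alphabet $A$) that is almost mean equicontinuous but not almost diam-mean equicontinuous.
   Context: A cellular automaton is a pair $(A^{\mathbb{Z}},T)$ with $A$ a finite set, $A^{\mathbb{Z}}$ equipped with the metric $d(x,y)=2^{-\min\{|j|:x_j\neq y_j\}}$ ($x\neq y$), $d(x,x)=0$, and $T:A^{\mathbb{Z}}\to A^{\mathbb{Z}}$ continuous and commuting with the shift $\sigma$, $(\sigma x)_i=x_{i+1}$. For a topological dynamical system $(X,T)$ ($X$ compact metric, $T$ continuous), with $B_\delta(x)$ the open ball of radius $\delta$: a point $x$ is a mean equicontinuity point if for every $\varepsilon>0$ there is $\delta>0$ such that for all $y\in B_\delta(x)$, $\limsup_{n\to\infty}\frac1n\sum_{i=1}^n d(T^ix,T^iy)<\varepsilon$; $x$ is a diam-mean equicontinuity point if for every $\varepsilon>0$ there is $\delta>0$ with $\limsup_{n\to\infty}\frac1n\sum_{i=1}^n\operatorname{diam}(T^iB_\delta(x))<\varepsilon$. The system is almost mean equicontinuous (resp. almost diam-mean equicontinuous) if the set of mean equicontinuity points (resp. diam-mean equicontinuity points) is residual, i.e. contains a countable intersection of dense open sets. *)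

theory Defs
  imports "HOL-Analysis.Analysis" "HOL-Library.Liminf_Limsup"
begin

definition ball_in :: "'a set \<Rightarrow> ('a \<Rightarrow> 'a \<Rightarrow> real) \<Rightarrow> 'a \<Rightarrow> real \<Rightarrow> 'a set" where
  "ball_in X d x r = {y \<in> X. d x y < r}"

definition diam_in :: "('a \<Rightarrow> 'a \<Rightarrow> real) \<Rightarrow> 'a set \<Rightarrow> real" where
  "diam_in d S = Sup {d a b | a b. a \<in> S \<and> b \<in> S}"

definition open_in_sp :: "'a set \<Rightarrow> ('a \<Rightarrow> 'a \<Rightarrow> real) \<Rightarrow> 'a set \<Rightarrow> bool" where
  "open_in_sp X d U \<longleftrightarrow> U \<subseteq> X \<and> (\<forall>x\<in>U. \<exists>r>0. ball_in X d x r \<subseteq> U)"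

definition dense_in_sp :: "'a set \<Rightarrow> ('a \<Rightarrow> 'a \<Rightarrow> real) \<Rightarrow> 'a set \<Rightarrow> bool" where
  "dense_in_sp X d U \<longleftrightarrow> (\<forall>x\<in>X. \<forall>r>0. ball_in X d x r \<inter> U \<noteq> {})"

definition residual_in :: "'a set \<Rightarrow> ('a \<Rightarrow> 'a \<Rightarrow> real) \<Rightarrow> 'a set \<Rightarrow> bool" where
  "residual_in X d S \<longleftrightarrow>
     (\<exists>U :: nat \<Rightarrow> 'a set. (\<forall>n. open_in_sp X d (U n) \<and> dense_in_sp X d (U n))
        \<and> (\<Inter>n. U n) \<subseteq> S)"

definition mean_eq_point :: "'a set \<Rightarrow> ('a \<Rightarrow> 'a \<Rightarrow> real) \<Rightarrow> ('a \<Rightarrow> 'a) \<Rightarrow> 'a \<Rightarrow> bool" where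
  "mean_eq_point X d T x \<longleftrightarrow>
     (\<forall>\<epsilon>>0. \<exists>\<delta>>0. \<forall>y\<in>ball_in X d x \<delta>.
        limsup (\<lambda>n. ereal ((1 / real n) * (\<Sum>i=1..n. d ((T ^^ i) x) ((T ^^ i) y)))) < ereal \<epsilon>)"

definition diam_mean_eq_point :: "'a set \<Rightarrow> ('a \<Rightarrow> 'a \<Rightarrow> real) \<Rightarrow> ('a \<Rightarrow> 'a) \<Rightarrow> 'a \<Rightarrow> bool" where
  "diam_mean_eq_point X d T x \<longleftrightarrow>
     (\<forall>\<epsilon>>0. \<exists>\<delta>>0.
        limsup (\<lambda>n. ereal ((1 / real n) * (\<Sum>i=1..n. diam_in d ((T ^^ i) ` ball_in X d x \<delta>)))) < ereal \<epsilon>)"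

definition almost_mean_eq :: "'a set \<Rightarrow> ('a \<Rightarrow> 'a \<Rightarrow> real) \<Rightarrow> ('a \<Rightarrow> 'a) \<Rightarrow> bool" where
  "almost_mean_eq X d T \<longleftrightarrow> residual_in X d {x \<in> X. mean_eq_point X d T x}"

definition almost_diam_mean_eq :: "'a set \<Rightarrow> ('a \<Rightarrow> 'a \<Rightarrow> real) \<Rightarrow> ('a \<Rightarrow> 'a) \<Rightarrow> bool" where
  "almost_diam_mean_eq X d T \<longleftrightarrow> residual_in X d {x \<in> X. diam_mean_eq_point X d T x}"

definition full_shift :: "nat set \<Rightarrow> (int \<Rightarrow> nat) set" where
  "full_shift A = {x. \<forall>i. x i \<in> A}"

definition cfg_dist :: "(int \<Rightarrow> nat) \<Rightarrow> (int \<Rightarrow> nat) \<Rightarrow> real" where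
  "cfg_dist x y = (if x = y then 0 else (1/2) ^ (LEAST n. \<exists>j. nat \<bar>j\<bar> = n \<and> x j \<noteq> y j))"

definition shift :: "(int \<Rightarrow> nat) \<Rightarrow> (int \<Rightarrow> nat)" where
  "shift x = (\<lambda>i. x (i + 1))"

definition cellular_automaton :: "nat set \<Rightarrow> ((int \<Rightarrow> nat) \<Rightarrow> (int \<Rightarrow> nat)) \<Rightarrow> bool" where
  "cellular_automaton A T \<longleftrightarrow>
     finite A \<and>
     (\<forall>x\<in>full_shift A. T x \<in> full_shift A) \<and>
     (\<forall>x\<in>full_shift A. \<forall>\<epsilon>>0. \<exists>\<delta>>0. \<forall>y\<in>full_shift A.
         cfg_dist x y < \<delta> \<longrightarrow> cfg_dist (T x) (T y) < \<epsilon>) \<and>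
     (\<forall>x\<in>full_shift A. T (shift x) = shift (T x))"

end

theory Submission
  imports Defs
begin

(* Every cell carries a static terrain symbol 0, 1 or 2 plus a signal bit and a marker bit.
   Signals move one cell to the left per step; a passing signal spawns a marker on every
   terrain-1 cell, and markers run to the right along terrain 1.  A terrain-2 cell is a gate
   that destroys an arriving signal while it is busy, that is, while the signal that crossed
   it last, or a marker spawned by that signal, is still right behind it.

   Signals cross terrain 0 freely, so a change planted far to the right reaches the origin
   much later: every ball, however small, has diameter 1 at all large times, and there are no
   diam-mean equicontinuity points.  On the other hand, a gate behind a run of L ones lets
   through at most one signal every 2L + 2 steps, and the region between the run and a
   non-1 cell on the left is disturbed only for a bounded time after each admitted signal.
   Configurations with such filters of arbitrarily good ratio around the origin form a dense
   G-delta set; at these points nearby orbits differ near the origin only on a set of times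
   of small density, which is mean equicontinuity. *)

section \<open>The metric of the full shift\<close>

lemma cfg_dist_less_half_pow_iff:
  "cfg_dist x y < (1/2)^k \<longleftrightarrow> (\<forall>j. \<bar>j\<bar> \<le> int k \<longrightarrow> x j = y j)"
proof (cases "x = y")
  case True
  then show ?thesis by (simp add: cfg_dist_def)
next
  case False
  define n where "n = (LEAST n. \<exists>j. nat \<bar>j\<bar> = n \<and> x j \<noteq> y j)"
  obtain j0 where "x j0 \<noteq> y j0"
    using False by auto
  then have "\<exists>j. nat \<bar>j\<bar> = nat \<bar>j0\<bar> \<and> x j \<noteq> y j"
    by blast
  then have n_attained: "\<exists>j. nat \<bar>j\<bar> = n \<and> x j \<noteq> y j"
    unfolding n_def by (rule LeastI)
  have n_least: "n \<le> nat \<bar>j\<bar>" if "x j \<noteq> y j" for j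
    unfolding n_def by (rule Least_le) (use that in blast)
  have "(1/2::real)^n < (1/2)^k \<longleftrightarrow> k < n"
    by (simp add: power_strict_decreasing_iff)
  also have "\<dots> \<longleftrightarrow> (\<forall>j. \<bar>j\<bar> \<le> int k \<longrightarrow> x j = y j)"
  proof
    assume "k < n"
    then show "\<forall>j. \<bar>j\<bar> \<le> int k \<longrightarrow> x j = y j"
      using n_least by force
  next
    assume "\<forall>j. \<bar>j\<bar> \<le> int k \<longrightarrow> x j = y j"
    with n_attained show "k < n"
      by force
  qed
  finally show ?thesis
    using False by (simp add: cfg_dist_def n_def)
qed

lemma cfg_dist_le_1: "cfg_dist x y \<le> 1"
  by (simp add: cfg_dist_def power_le_one)

lemma cfg_dist_eq_1:
  assumes "x 0 \<noteq> y 0"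
  shows "cfg_dist x y = 1"
proof -
  have "(LEAST n. \<exists>j. nat \<bar>j\<bar> = n \<and> x j \<noteq> y j) = 0"
    by (rule Least_eq_0) (use assms in auto)
  then show ?thesis
    using assms by (auto simp: cfg_dist_def)
qed

lemma ex_half_pow_less: "0 < r \<Longrightarrow> \<exists>N. (1/2::real)^N < r"
  using real_arch_pow_inv[of r "1/2"] by auto

lemma cfg_dist_le_diam_in:
  assumes "a \<in> S" "b \<in> S"
  shows "cfg_dist a b \<le> diam_in cfg_dist S"
  unfolding diam_in_def
  by (rule cSup_upper) (use assms in \<open>auto intro: bdd_aboveI[of _ 1] simp: cfg_dist_le_1\<close>)

lemma sum_cfg_dist_le:
  "(\<Sum>i=1..N. cfg_dist (u i) (v i))
    \<le> real N * (1/2)^k + real (card {n \<in> {1..N}. \<exists>j. \<bar>j\<bar> \<le> int k \<and> u n j \<noteq> v n j})"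
proof -
  let ?differ = "\<lambda>n. \<exists>j. \<bar>j\<bar> \<le> int k \<and> u n j \<noteq> v n j"
  have "cfg_dist (u i) (v i) \<le> (1/2)^k + of_bool (?differ i)" for i
  proof (cases "?differ i")
    case True
    then show ?thesis
      using cfg_dist_le_1[of "u i" "v i"] by (simp add: add_increasing)
  next
    case False
    then show ?thesis
      using cfg_dist_less_half_pow_iff[of "u i" "v i" k] by simp
  qed
  then have "(\<Sum>i=1..N. cfg_dist (u i) (v i)) \<le> (\<Sum>i=1..N. (1/2)^k + of_bool (?differ i))"
    by (rule sum_mono)
  also have "\<dots> = real N * (1/2)^k + real (card {n \<in> {1..N}. ?differ n})"
    by (simp add: sum.distrib sum_of_bool_eq Int_def conj_commute)
  finally show ?thesis .
qed

lemma mem_ball_in_cfg_dist_iff: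
  "y \<in> ball_in X cfg_dist z ((1/2)^N) \<longleftrightarrow> y \<in> X \<and> (\<forall>j. \<bar>j\<bar> \<le> int N \<longrightarrow> z j = y j)"
  by (simp add: ball_in_def cfg_dist_less_half_pow_iff)

lemma cylinder_subset_ball_in:
  assumes "0 < r"
  obtains N where "M < N" "ball_in X cfg_dist z ((1/2)^N) \<subseteq> ball_in X cfg_dist z r"
proof -
  obtain N0 where "(1/2::real)^N0 < r"
    using ex_half_pow_less[OF assms] by blast
  moreover have "(1/2::real)^(max N0 (Suc M)) \<le> (1/2)^N0"
    by (rule power_decreasing) auto
  ultimately have "(1/2::real)^(max N0 (Suc M)) < r"
    by linarith
  then have "ball_in X cfg_dist z ((1/2)^(max N0 (Suc M))) \<subseteq> ball_in X cfg_dist z r"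
    by (auto simp: ball_in_def)
  then show ?thesis
    using that[of "max N0 (Suc M)"] by simp
qed

lemma diagonal_agrees:
  fixes Z :: "nat \<Rightarrow> int \<Rightarrow> 'b"
  assumes NN: "strict_mono NN"
    and coherent: "\<And>n j. \<bar>j\<bar> \<le> int (NN n) \<Longrightarrow> Z (Suc n) j = Z n j"
    and j: "\<bar>j\<bar> \<le> int (NN n)"
  shows "Z (nat \<bar>j\<bar>) j = Z n j"
proof -
  have agree: "Z k j = Z n j" if "n \<le> k" "\<bar>j\<bar> \<le> int (NN n)" for n k j
    using that(1)
  proof (induction k rule: dec_induct)
    case (step k)
    have "NN n \<le> NN k"
      using step(1) NN by (simp add: strict_mono_less_eq)
    with step(3) that(2) show ?case
      using coherent[of j k] by simp
  qed simp
  show ?thesis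
  proof (cases "nat \<bar>j\<bar> \<le> n")
    case True
    have "nat \<bar>j\<bar> \<le> NN (nat \<bar>j\<bar>)"
      using NN by (rule strict_mono_imp_increasing)
    show ?thesis
      by (rule agree[symmetric]) (use True \<open>nat \<bar>j\<bar> \<le> NN (nat \<bar>j\<bar>)\<close> in auto)
  next
    case False
    show ?thesis
      by (rule agree) (use False j in auto)
  qed
qed

lemma cylinder_in_open_dense:
  assumes "open_in_sp X cfg_dist U" "dense_in_sp X cfg_dist U" "z \<in> X"
  obtains w N where "w \<in> X" "M < N" "\<forall>j. \<bar>j\<bar> \<le> int M \<longrightarrow> w j = z j"
    "ball_in X cfg_dist w ((1/2)^N) \<subseteq> U"
proof -
  have "(0::real) < (1/2)^M"
    by simp
  then have "ball_in X cfg_dist z ((1/2)^M) \<inter> U \<noteq> {}"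
    using assms(2,3) unfolding dense_in_sp_def by simp
  then obtain w where w: "w \<in> ball_in X cfg_dist z ((1/2)^M)" "w \<in> U"
    by blast
  obtain r where "r > 0" "ball_in X cfg_dist w r \<subseteq> U"
    using assms(1) w(2) unfolding open_in_sp_def by blast
  moreover obtain N where "M < N" "ball_in X cfg_dist w ((1/2)^N) \<subseteq> ball_in X cfg_dist w r"
    using cylinder_subset_ball_in[OF \<open>r > 0\<close>] by blast
  ultimately show ?thesis
    using that[of w N] w(1) by (auto simp: mem_ball_in_cfg_dist_iff)
qed

lemma nested_cylinders_in_open_dense:
  assumes A: "A \<noteq> {}"
    and U: "\<And>n. open_in_sp (full_shift A) cfg_dist (U n)" "\<And>n. dense_in_sp (full_shift A) cfg_dist (U n)"
  obtains Z NN where "\<And>n. Z n \<in> full_shift A" "strict_mono NN"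
    "\<And>n j. \<bar>j\<bar> \<le> int (NN n) \<Longrightarrow> Z (Suc n) j = Z n j"
    "\<And>n. ball_in (full_shift A) cfg_dist (Z (Suc n)) ((1/2)^NN (Suc n)) \<subseteq> U n"
proof -
  let ?X = "full_shift A"
  define refines where "refines n p q \<longleftrightarrow> snd p < snd q
      \<and> (\<forall>j. \<bar>j\<bar> \<le> int (snd p) \<longrightarrow> fst q j = fst p j)
      \<and> ball_in ?X cfg_dist (fst q) ((1/2)^snd q) \<subseteq> U n"
    for n and p q :: "(int \<Rightarrow> nat) \<times> nat"
  have refine: "\<exists>q. fst q \<in> ?X \<and> refines n p q" if p: "fst p \<in> ?X" for p n
  proof -
    obtain w N where "w \<in> ?X" "snd p < N" "\<forall>j. \<bar>j\<bar> \<le> int (snd p) \<longrightarrow> w j = fst p j"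
      "ball_in ?X cfg_dist w ((1/2)^N) \<subseteq> U n"
      by (rule cylinder_in_open_dense[OF U(1) U(2) p])
    then show ?thesis
      by (intro exI[of _ "(w, N)"]) (simp add: refines_def)
  qed
  obtain a where "a \<in> A"
    using A by blast
  then have init: "fst ((\<lambda>_. a, 0) :: (int \<Rightarrow> nat) \<times> nat) \<in> ?X"
    by (simp add: full_shift_def)
  have "\<exists>f. \<forall>n. fst (f n) \<in> ?X \<and> refines n (f n) (f (Suc n))"
    using dependent_nat_choice[where P = "\<lambda>_ p. fst p \<in> ?X" and Q = refines] init refine
    by blast
  then obtain f where f: "\<And>n. fst (f n) \<in> ?X" "\<And>n. refines n (f n) (f (Suc n))"
    by blast
  show ?thesis
  proof (rule that[of "\<lambda>n. fst (f n)" "\<lambda>n. snd (f n)"])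
    show "strict_mono (\<lambda>n. snd (f n))"
      using f(2) unfolding refines_def by (intro strict_monoI_Suc) blast
  qed (use f in \<open>auto simp: refines_def\<close>)
qed

lemma residual_in_full_shift_nonempty:
  assumes A: "A \<noteq> {}" and "residual_in (full_shift A) cfg_dist S"
  shows "\<exists>x\<in>full_shift A. x \<in> S"
proof -
  let ?X = "full_shift A"
  obtain U :: "nat \<Rightarrow> (int \<Rightarrow> nat) set"
    where U: "\<forall>n. open_in_sp ?X cfg_dist (U n) \<and> dense_in_sp ?X cfg_dist (U n)"
    and US: "(\<Inter>n. U n) \<subseteq> S"
    using assms(2) unfolding residual_in_def by blast
  have "open_in_sp ?X cfg_dist (U n)" "dense_in_sp ?X cfg_dist (U n)" for n
    using U by simp_all
  then obtain Z NN where Z: "\<And>n. Z n \<in> ?X" "strict_mono NN"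
    "\<And>n j. \<bar>j\<bar> \<le> int (NN n) \<Longrightarrow> Z (Suc n) j = Z n j"
    "\<And>n. ball_in ?X cfg_dist (Z (Suc n)) ((1/2)^NN (Suc n)) \<subseteq> U n"
    using nested_cylinders_in_open_dense[OF A] by metis
  define z where "z j = Z (nat \<bar>j\<bar>) j" for j
  have zX: "z \<in> ?X"
    using Z(1) by (simp add: z_def full_shift_def)
  have "z \<in> U n" for n
  proof -
    have "\<forall>j. \<bar>j\<bar> \<le> int (NN (Suc n)) \<longrightarrow> Z (Suc n) j = z j"
      using diagonal_agrees[where Z = Z, OF Z(2,3)] unfolding z_def by simp
    then have "z \<in> ball_in ?X cfg_dist (Z (Suc n)) ((1/2)^NN (Suc n))"
      using zX by (simp add: mem_ball_in_cfg_dist_iff)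
    then show ?thesis
      using Z(4) by blast
  qed
  then show ?thesis
    using zX US by blast
qed

section \<open>Averages and counting\<close>

lemma LIMSEQ_const_plus_over_n:
  fixes c C :: real
  shows "(\<lambda>N. ereal (c + C / real N)) \<longlonglongrightarrow> ereal c"
  using tendsto_add[OF tendsto_const[of c] lim_const_over_n[of C]] by (simp add: tendsto_ereal)

lemma limsup_le_const_plus_over_n:
  fixes c C :: real
  assumes "\<And>N. N \<ge> 1 \<Longrightarrow> f N \<le> c + C / real N"
  shows "limsup (\<lambda>N. ereal (f N)) \<le> ereal c"
proof -
  have "limsup (\<lambda>N. ereal (f N)) \<le> limsup (\<lambda>N. ereal (c + C / real N))"
    by (rule Limsup_mono) (use assms in \<open>auto intro!: eventually_sequentiallyI[of 1]\<close>)
  also have "\<dots> = ereal c"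
    by (rule lim_imp_Limsup[OF _ LIMSEQ_const_plus_over_n]) simp
  finally show ?thesis .
qed

lemma limsup_ge_const_plus_over_n:
  fixes c C :: real
  assumes "\<And>N. N \<ge> 1 \<Longrightarrow> c + C / real N \<le> f N"
  shows "ereal c \<le> limsup (\<lambda>N. ereal (f N))"
proof -
  have "ereal c = limsup (\<lambda>N. ereal (c + C / real N))"
    by (rule lim_imp_Limsup[OF _ LIMSEQ_const_plus_over_n, symmetric]) simp
  also have "\<dots> \<le> limsup (\<lambda>N. ereal (f N))"
    by (rule Limsup_mono) (use assms in \<open>auto intro!: eventually_sequentiallyI[of 1]\<close>)
  finally show ?thesis .
qed

lemma sum_ge_if_eventually_ge:
  fixes g :: "nat \<Rightarrow> real"
  assumes "\<And>i. 0 \<le> g i" and "\<And>i. N0 \<le> i \<Longrightarrow> c \<le> g i" and "0 \<le> c"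
  shows "c * (real N - real N0) \<le> (\<Sum>i=1..N. g i)"
proof (induction N)
  case (Suc N)
  show ?case
  proof (cases "N0 \<le> Suc N")
    case True
    then show ?thesis
      using Suc assms(2)[OF True] by (simp add: algebra_simps)
  next
    case False
    then have "c * (real (Suc N) - real N0) \<le> 0"
      using assms(3) by (simp add: mult_nonneg_nonpos)
    also have "0 \<le> (\<Sum>i=1..Suc N. g i)"
      using assms(1) by (simp add: sum_nonneg)
    finally show ?thesis .
  qed
qed (use assms(3) in simp)

lemma limsup_mean_ge_if_eventually_ge:
  fixes g :: "nat \<Rightarrow> real"
  assumes "\<And>i. 0 \<le> g i" and "\<And>i. N0 \<le> i \<Longrightarrow> c \<le> g i" and "0 \<le> c"
  shows "ereal c \<le> limsup (\<lambda>n. ereal ((1 / real n) * (\<Sum>i=1..n. g i)))"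
proof (rule limsup_ge_const_plus_over_n[of c "- c * real N0"])
  fix N :: nat
  assume "N \<ge> 1"
  have "c + - c * real N0 / real N = c * (real N - real N0) / real N"
    using \<open>N \<ge> 1\<close> by (simp add: field_simps)
  also have "\<dots> \<le> (\<Sum>i=1..N. g i) / real N"
  proof (rule divide_right_mono)
    show "c * (real N - real N0) \<le> (\<Sum>i=1..N. g i)"
      by (rule sum_ge_if_eventually_ge) (use assms in auto)
  qed simp
  finally show "c + - c * real N0 / real N \<le> (1 / real N) * (\<Sum>i=1..N. g i)"
    by simp
qed

lemma half_pow_le_inverse: "1 \<le> k \<Longrightarrow> (1/2::real)^k \<le> 1 / real k"
proof -
  assume "1 \<le> k"
  have "real k \<le> 2 ^ k"
    using less_exp[of k] by (simp add: less_imp_le)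
  then show ?thesis
    using \<open>1 \<le> k\<close> by (simp add: divide_simps)
qed

lemma card_separated_le:
  assumes sep: "\<And>\<sigma> s. P \<sigma> \<Longrightarrow> 1 \<le> s \<Longrightarrow> s < S \<Longrightarrow> \<not> P (\<sigma> + s)" and "0 < S"
  shows "card {\<sigma>. \<sigma> < N \<and> P \<sigma>} \<le> N div S + 1"
proof -
  have same_block: "\<sigma> = \<tau>" if "P \<sigma>" "P \<tau>" "\<sigma> \<le> \<tau>" "\<sigma> div S = \<tau> div S" for \<sigma> \<tau>
  proof (rule ccontr)
    assume "\<sigma> \<noteq> \<tau>"
    have "S * (\<tau> div S) + \<sigma> mod S = \<sigma>" "S * (\<tau> div S) + \<tau> mod S = \<tau>"
      using mult_div_mod_eq[of S \<sigma>] mult_div_mod_eq[of S \<tau>] that(4) by simp_all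
    then have "\<tau> - \<sigma> < S"
      using mod_less_divisor[OF \<open>0 < S\<close>, of \<tau>] by linarith
    moreover have "1 \<le> \<tau> - \<sigma>"
      using \<open>\<sigma> \<noteq> \<tau>\<close> that(3) by simp
    ultimately have "\<not> P (\<sigma> + (\<tau> - \<sigma>))"
      using sep[OF that(1)] by blast
    then show False
      using that(2,3) by simp
  qed
  have "inj_on (\<lambda>\<sigma>. \<sigma> div S) {\<sigma>. \<sigma> < N \<and> P \<sigma>}"
    by (rule inj_onI) (metis (mono_tags) mem_Collect_eq nle_le same_block)
  moreover have "(\<lambda>\<sigma>. \<sigma> div S) ` {\<sigma>. \<sigma> < N \<and> P \<sigma>} \<subseteq> {..N div S}"
    by (auto intro: div_le_mono)
  ultimately show ?thesis
    using card_inj_on_le[of "\<lambda>\<sigma>. \<sigma> div S" _ "{..N div S}"] by simp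
qed

section \<open>The automaton\<close>

(* The cell value t + 3 b + 6 m, with t < 3, stores the terrain t, the signal bit b and the
   marker bit m, so the alphabet is {0, ..., 11}. *)
definition terrain :: "(int \<Rightarrow> nat) \<Rightarrow> int \<Rightarrow> nat" where
  "terrain x i = x i mod 3"

definition signal :: "(int \<Rightarrow> nat) \<Rightarrow> int \<Rightarrow> bool" where
  "signal x i \<longleftrightarrow> x i div 3 mod 2 = 1"

definition marker :: "(int \<Rightarrow> nat) \<Rightarrow> int \<Rightarrow> bool" where
  "marker x i \<longleftrightarrow> x i div 6 mod 2 = 1"

definition cell :: "nat \<Rightarrow> bool \<Rightarrow> bool \<Rightarrow> nat" where
  "cell t b m = t + 3 * of_bool b + 6 * of_bool m"

definition gate_busy :: "(int \<Rightarrow> nat) \<Rightarrow> int \<Rightarrow> bool" where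
  "gate_busy x i \<longleftrightarrow> signal x i \<or> signal x (i - 1) \<or> marker x (i - 1) \<or> marker x (i - 2)"

definition gate_ca :: "(int \<Rightarrow> nat) \<Rightarrow> int \<Rightarrow> nat" where
  "gate_ca x i = cell (terrain x i)
     (signal x (i + 1) \<and> \<not> (terrain x i = 2 \<and> gate_busy x i))
     (terrain x i = 1 \<and> (marker x (i - 1) \<or> signal x i))"

abbreviation gate_alphabet :: "nat set" where
  "gate_alphabet \<equiv> {..<12}"

lemma cell_decode:
  assumes "t < 3"
  shows "cell t b m mod 3 = t" "cell t b m div 3 mod 2 = 1 \<longleftrightarrow> b"
    "cell t b m div 6 mod 2 = 1 \<longleftrightarrow> m" "cell t b m < 12"
proof -
  have "t = 0 \<or> t = 1 \<or> t = 2"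
    using assms by auto
  then show "cell t b m mod 3 = t" "cell t b m div 3 mod 2 = 1 \<longleftrightarrow> b"
    "cell t b m div 6 mod 2 = 1 \<longleftrightarrow> m" "cell t b m < 12"
    by (cases b; cases m; auto simp: cell_def)+
qed

lemma terrain_less_3: "terrain x i < 3"
  by (simp add: terrain_def)

lemma terrain_gate_ca [simp]: "terrain (gate_ca x) i = terrain x i"
  using cell_decode(1)[OF terrain_less_3] by (simp add: terrain_def[of "gate_ca x"] gate_ca_def)

lemma signal_gate_ca:
  "signal (gate_ca x) i \<longleftrightarrow> signal x (i + 1) \<and> \<not> (terrain x i = 2 \<and> gate_busy x i)"
  using cell_decode(2)[OF terrain_less_3] by (simp add: signal_def[of "gate_ca x"] gate_ca_def)

lemma marker_gate_ca:
  "marker (gate_ca x) i \<longleftrightarrow> terrain x i = 1 \<and> (marker x (i - 1) \<or> signal x i)"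
  using cell_decode(3)[OF terrain_less_3] by (simp add: marker_def[of "gate_ca x"] gate_ca_def)

lemma gate_ca_less_12: "gate_ca x i < 12"
  using cell_decode(4)[OF terrain_less_3] by (simp add: gate_ca_def)

lemma gate_ca_eq_cell:
  "gate_ca x i = cell (terrain (gate_ca x) i) (signal (gate_ca x) i) (marker (gate_ca x) i)"
  by (simp add: signal_gate_ca marker_gate_ca) (simp add: gate_ca_def)

lemma terrain_iterate [simp]: "terrain ((gate_ca ^^ n) x) i = terrain x i"
  by (induction n) auto

lemma gate_ca_local:
  assumes "\<forall>j. \<bar>j\<bar> \<le> int k + 2 \<longrightarrow> x j = y j" and "\<bar>i\<bar> \<le> int k"
  shows "gate_ca x i = gate_ca y i"
  using assms by (simp add: gate_ca_def terrain_def signal_def marker_def gate_busy_def)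

lemma gate_ca_shift: "gate_ca (shift x) = shift (gate_ca x)"
  by (rule ext) (simp add: gate_ca_def terrain_def signal_def marker_def gate_busy_def shift_def algebra_simps)

lemma cellular_automaton_gate_ca: "cellular_automaton gate_alphabet gate_ca"
  unfolding cellular_automaton_def
proof (intro conjI ballI allI impI)
  fix x :: "int \<Rightarrow> nat" and e :: real
  assume "0 < e"
  then obtain k where k: "(1/2::real)^k < e"
    using ex_half_pow_less by blast
  show "\<exists>d>0. \<forall>y\<in>full_shift gate_alphabet. cfg_dist x y < d \<longrightarrow> cfg_dist (gate_ca x) (gate_ca y) < e"
  proof (intro exI[of _ "(1/2)^(k+2)"] conjI ballI impI)
    fix y
    assume "cfg_dist x y < (1/2)^(k+2)"
    then have "\<forall>j. \<bar>j\<bar> \<le> int k + 2 \<longrightarrow> x j = y j"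
      using cfg_dist_less_half_pow_iff[of x y "k+2"] by simp
    then have "cfg_dist (gate_ca x) (gate_ca y) < (1/2)^k"
      using gate_ca_local by (simp add: cfg_dist_less_half_pow_iff)
    then show "cfg_dist (gate_ca x) (gate_ca y) < e"
      using k by simp
  qed simp
qed (auto simp: full_shift_def gate_ca_less_12 gate_ca_shift)

lemma signal_iterate_imp:
  "signal ((gate_ca ^^ (n + k)) x) j \<Longrightarrow> signal ((gate_ca ^^ n) x) (j + int k)"
proof (induction k arbitrary: j)
  case (Suc k)
  then have "signal ((gate_ca ^^ (n + k)) x) (j + 1)"
    by (simp add: signal_gate_ca)
  then have "signal ((gate_ca ^^ n) x) (j + 1 + int k)"
    using Suc.IH by blast
  then show ?case
    by (simp add: algebra_simps)
qed simp

lemma signal_iterate_imp_initial: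
  "signal ((gate_ca ^^ k) x) j \<Longrightarrow> signal x (j + int k)"
  using signal_iterate_imp[of 0 k x j] by simp

lemma signal_iterate_no_gate:
  assumes "\<forall>i. j \<le> i \<and> i < j + int k \<longrightarrow> terrain x i \<noteq> 2"
  shows "signal ((gate_ca ^^ (n + k)) x) j \<longleftrightarrow> signal ((gate_ca ^^ n) x) (j + int k)"
  using assms
proof (induction k arbitrary: j)
  case (Suc k)
  have "terrain x j \<noteq> 2"
    using Suc.prems by auto
  then have "signal ((gate_ca ^^ (n + Suc k)) x) j \<longleftrightarrow> signal ((gate_ca ^^ (n + k)) x) (j + 1)"
    by (simp add: signal_gate_ca)
  also have "\<dots> \<longleftrightarrow> signal ((gate_ca ^^ n) x) (j + 1 + int k)"
    using Suc.prems by (intro Suc.IH) auto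
  finally show ?case
    by (simp add: algebra_simps)
qed simp

section \<open>Sensitivity\<close>

lemma no_marker_behind_front:
  assumes terrain_outside: "\<And>j. int m < \<bar>j\<bar> \<Longrightarrow> terrain z j = 0"
    and signal_inside: "\<And>j. signal z j \<Longrightarrow> \<bar>j\<bar> \<le> int m \<or> j = int P"
  shows "- int m - 1 \<le> j \<Longrightarrow> j < int \<tau> - 3 * int m - 2 \<Longrightarrow> j < int P - int \<tau>
    \<Longrightarrow> \<not> marker ((gate_ca ^^ \<tau>) z) j"
proof (induction \<tau> arbitrary: j)
  case (Suc \<tau>)
  show ?case
  proof (cases "j = - int m - 1")
    case True
    then show ?thesis
      using terrain_outside[of j] by (simp add: marker_gate_ca)
  next
    case False
    have "\<not> marker ((gate_ca ^^ \<tau>) z) (j - 1)"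
      using Suc False by auto
    moreover have "\<not> signal ((gate_ca ^^ \<tau>) z) j"
    proof
      assume "signal ((gate_ca ^^ \<tau>) z) j"
      from signal_inside[OF signal_iterate_imp_initial[OF this]] show False
        using Suc.prems False by auto
    qed
    ultimately show ?thesis
      by (simp add: marker_gate_ca)
  qed
qed simp

lemma signal_front_survives:
  assumes terrain_outside: "\<And>j. int m < \<bar>j\<bar> \<Longrightarrow> terrain z j = 0"
    and signal_inside: "\<And>j. signal z j \<Longrightarrow> \<bar>j\<bar> \<le> int m \<or> j = int P"
    and front: "signal z (int P)" and P: "5 * m + 5 \<le> P" and m: "1 \<le> m"
  shows "\<tau> \<le> P \<Longrightarrow> signal ((gate_ca ^^ \<tau>) z) (int P - int \<tau>)"
proof (induction \<tau>)
  case (Suc \<tau>)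
  define c where "c = int P - int \<tau> - 1"
  have no_signal_from_inside: "\<not> signal ((gate_ca ^^ \<tau>) z) i" if "i \<le> c" "c - 1 \<le> i" for i
    using signal_inside[OF signal_iterate_imp_initial] that Suc.prems P by (force simp: c_def)
  have "\<not> (terrain z c = 2 \<and> gate_busy ((gate_ca ^^ \<tau>) z) c)"
  proof
    assume gate: "terrain z c = 2 \<and> gate_busy ((gate_ca ^^ \<tau>) z) c"
    then have "\<bar>c\<bar> \<le> int m"
      using terrain_outside[of c] by fastforce
    have "\<not> marker ((gate_ca ^^ \<tau>) z) j" if "j = c - 1 \<or> j = c - 2" for j
      by (rule no_marker_behind_front[OF assms(1,2)])
        (use that \<open>\<bar>c\<bar> \<le> int m\<close> Suc.prems P m in \<open>auto simp: c_def\<close>)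
    then show False
      using gate no_signal_from_inside[of c] no_signal_from_inside[of "c - 1"]
      by (auto simp: gate_busy_def)
  qed
  then have "signal ((gate_ca ^^ Suc \<tau>) z) c"
    using Suc by (simp add: signal_gate_ca c_def)
  then show ?case
    by (simp add: c_def algebra_simps)
qed (simp add: front)

lemma gate_ca_sensitive:
  assumes x: "x \<in> full_shift gate_alphabet" and m: "1 \<le> m" and P: "5 * m + 5 \<le> P"
  obtains y y' where "y \<in> full_shift gate_alphabet" "y' \<in> full_shift gate_alphabet"
    "\<forall>j. \<bar>j\<bar> \<le> int m \<longrightarrow> x j = y j" "\<forall>j. \<bar>j\<bar> \<le> int m \<longrightarrow> x j = y' j"
    "cfg_dist ((gate_ca ^^ P) y) ((gate_ca ^^ P) y') = 1"
proof
  define y where "y j = (if \<bar>j\<bar> \<le> int m then x j else 0)" for j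
  define y' where "y' = y(int P := 3)"
  show "y \<in> full_shift gate_alphabet" "y' \<in> full_shift gate_alphabet"
    using x by (auto simp: full_shift_def y_def y'_def)
  show "\<forall>j. \<bar>j\<bar> \<le> int m \<longrightarrow> x j = y j" "\<forall>j. \<bar>j\<bar> \<le> int m \<longrightarrow> x j = y' j"
    using P by (auto simp: y_def y'_def)
  have "terrain y' j = 0" if "int m < \<bar>j\<bar>" for j
    using that by (simp add: y'_def y_def terrain_def)
  moreover have "\<bar>j\<bar> \<le> int m \<or> j = int P" if "signal y' j" for j
    using that by (auto simp: y'_def y_def signal_def split: if_splits)
  moreover have "signal y' (int P)"
    by (simp add: y'_def signal_def)
  ultimately have "signal ((gate_ca ^^ P) y') 0"
    using signal_front_survives[of m y' P P] P m by simp
  moreover have "\<not> signal ((gate_ca ^^ P) y) 0"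
  proof
    assume "signal ((gate_ca ^^ P) y) 0"
    then have "signal y (int P)"
      using signal_iterate_imp_initial by fastforce
    then show False
      using P by (simp add: y_def signal_def)
  qed
  ultimately show "cfg_dist ((gate_ca ^^ P) y) ((gate_ca ^^ P) y') = 1"
    by (intro cfg_dist_eq_1) (auto simp: signal_def)
qed

lemma not_diam_mean_eq_point_gate_ca:
  assumes x: "x \<in> full_shift gate_alphabet"
  shows "\<not> diam_mean_eq_point (full_shift gate_alphabet) cfg_dist gate_ca x"
proof
  let ?B = "\<lambda>\<delta>. ball_in (full_shift gate_alphabet) cfg_dist x \<delta>"
  assume "diam_mean_eq_point (full_shift gate_alphabet) cfg_dist gate_ca x"
  then obtain \<delta> where "\<delta> > 0" and small:
    "limsup (\<lambda>n. ereal ((1 / real n) * (\<Sum>i=1..n. diam_in cfg_dist ((gate_ca ^^ i) ` ?B \<delta>)))) < ereal 1"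
    unfolding diam_mean_eq_point_def by (meson zero_less_one)
  then obtain m where m: "0 < m" "?B ((1/2)^m) \<subseteq> ?B \<delta>"
    using cylinder_subset_ball_in by blast
  have "x \<in> ?B \<delta>"
    using x \<open>\<delta> > 0\<close> by (simp add: ball_in_def cfg_dist_def)
  then have "0 \<le> diam_in cfg_dist ((gate_ca ^^ i) ` ?B \<delta>)" for i
    using cfg_dist_le_diam_in[of "(gate_ca ^^ i) x" _ "(gate_ca ^^ i) x"] by (simp add: cfg_dist_def)
  moreover have "1 \<le> diam_in cfg_dist ((gate_ca ^^ P) ` ?B \<delta>)" if P: "5 * m + 5 \<le> P" for P
  proof -
    obtain y y' where "y \<in> full_shift gate_alphabet" "y' \<in> full_shift gate_alphabet"
      "\<forall>j. \<bar>j\<bar> \<le> int m \<longrightarrow> x j = y j" "\<forall>j. \<bar>j\<bar> \<le> int m \<longrightarrow> x j = y' j"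
      and dist: "cfg_dist ((gate_ca ^^ P) y) ((gate_ca ^^ P) y') = 1"
      using gate_ca_sensitive[OF x _ P] m(1) by auto
    then have "y \<in> ?B ((1/2)^m)" "y' \<in> ?B ((1/2)^m)"
      by (simp_all add: mem_ball_in_cfg_dist_iff)
    then show ?thesis
      using dist m(2) cfg_dist_le_diam_in[of "(gate_ca ^^ P) y" "(gate_ca ^^ P) ` ?B \<delta>"] by fastforce
  qed
  ultimately have "ereal 1 \<le> limsup (\<lambda>n. ereal ((1 / real n) * (\<Sum>i=1..n. diam_in cfg_dist ((gate_ca ^^ i) ` ?B \<delta>))))"
    by (intro limsup_mean_ge_if_eventually_ge[of _ "5 * m + 5"]) auto
  then show False
    using small by simp
qed

section \<open>Filters\<close>

definition gate_window :: "(int \<Rightarrow> nat) \<Rightarrow> int \<Rightarrow> int \<Rightarrow> nat \<Rightarrow> bool" where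
  "gate_window x a p L \<longleftrightarrow> a \<le> p \<and> 2 \<le> L \<and> terrain x a \<noteq> 1
     \<and> (\<forall>i. p < i \<and> i \<le> p + int L \<longrightarrow> terrain x i = 1) \<and> terrain x (p + int L + 1) = 2"

lemma gate_window_cong:
  assumes "\<forall>j. a \<le> j \<and> j \<le> p + int L + 1 \<longrightarrow> terrain y j = terrain x j" and "a \<le> p"
  shows "gate_window y a p L \<longleftrightarrow> gate_window x a p L"
  using assms unfolding gate_window_def by auto

lemma marker_after_signal:
  assumes "\<forall>i. c \<le> i \<and> i \<le> c + int r \<longrightarrow> terrain z i = 1" and "signal ((gate_ca ^^ t) z) c"
  shows "marker ((gate_ca ^^ (t + 1 + r)) z) (c + int r)"
  using assms
proof (induction r)
  case (Suc r)
  then have "marker ((gate_ca ^^ (t + 1 + r)) z) (c + int r)"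
    by auto
  moreover have "terrain z (c + int (Suc r)) = 1"
    using Suc.prems by auto
  ultimately show ?case
    by (simp add: marker_gate_ca algebra_simps)
qed (simp add: marker_gate_ca)

lemma signal_enters_window:
  assumes "gate_window z a p L" and "k \<le> L"
  shows "signal ((gate_ca ^^ (\<sigma> + k)) z) (p + int L + 1 - int k)
    \<longleftrightarrow> signal ((gate_ca ^^ \<sigma>) z) (p + int L + 1)"
  using signal_iterate_no_gate[of "p + int L + 1 - int k" k z \<sigma>] assms
  by (auto simp: gate_window_def)

lemma marker_behind_gate:
  assumes w: "gate_window z a p L" and sig: "signal ((gate_ca ^^ \<sigma>) z) (p + int L + 1)"
    and "r + 1 + e \<le> L"
  shows "marker ((gate_ca ^^ (\<sigma> + 2 * r + 2 + e)) z) (p + int L - int e)"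
proof -
  let ?c = "p + int L + 1 - int (r + 1 + e)"
  have "\<forall>i. ?c \<le> i \<and> i \<le> ?c + int r \<longrightarrow> terrain z i = 1"
    using w assms(3) unfolding gate_window_def by auto
  moreover have "signal ((gate_ca ^^ (\<sigma> + (r + 1 + e))) z) ?c"
    using signal_enters_window[OF w assms(3)] sig by simp
  ultimately have "marker ((gate_ca ^^ (\<sigma> + (r + 1 + e) + 1 + r)) z) (?c + int r)"
    by (rule marker_after_signal)
  moreover have "\<sigma> + (r + 1 + e) + 1 + r = \<sigma> + 2 * r + 2 + e" "?c + int r = p + int L - int e"
    by simp_all
  ultimately show ?thesis
    by metis
qed

(* After admitting a signal the gate stays busy for 2L steps: first the signal is right
   behind it, then the markers it spawned on the run of ones walk back to the gate. *)
lemma gate_busy_after_signal: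
  assumes w: "gate_window z a p L" and sig: "signal ((gate_ca ^^ \<sigma>) z) (p + int L + 1)"
    and u: "u \<le> 2 * L"
  shows "gate_busy ((gate_ca ^^ (\<sigma> + u)) z) (p + int L + 1)"
proof -
  have "u = 0 \<or> u = 1 \<or> (\<exists>r. u = 2 * r + 2) \<or> (\<exists>r. u = 2 * r + 3)"
    by presburger
  then consider "u = 0" | "u = 1" | r where "u = 2 * r + 2" | r where "u = 2 * r + 3"
    by blast
  then show ?thesis
  proof cases
    case 1
    then show ?thesis
      using sig by (simp add: gate_busy_def)
  next
    case 2
    then show ?thesis
      using signal_enters_window[OF w, of 1 \<sigma>] sig w by (simp add: gate_busy_def gate_window_def)
  next
    case (3 r)
    then have "marker ((gate_ca ^^ (\<sigma> + 2 * r + 2 + 0)) z) (p + int L - int 0)"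
      using u by (intro marker_behind_gate[OF w sig]) simp
    then show ?thesis
      using 3 by (simp add: gate_busy_def add.assoc)
  next
    case (4 r)
    then have "marker ((gate_ca ^^ (\<sigma> + 2 * r + 2 + 1)) z) (p + int L - int 1)"
      using u by (intro marker_behind_gate[OF w sig]) simp
    moreover have "\<sigma> + 2 * r + 2 + 1 = \<sigma> + u" "p + int L - int 1 = p + int L + 1 - 2"
      using 4 by simp_all
    ultimately show ?thesis
      unfolding gate_busy_def by metis
  qed
qed

lemma gate_signals_separated:
  assumes w: "gate_window z a p L" and sig: "signal ((gate_ca ^^ \<sigma>) z) (p + int L + 1)"
    and s: "1 \<le> s" "s \<le> 2 * L + 1"
  shows "\<not> signal ((gate_ca ^^ (\<sigma> + s)) z) (p + int L + 1)"
proof -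
  obtain u where u: "s = Suc u"
    using s(1) by (cases s) auto
  have "gate_busy ((gate_ca ^^ (\<sigma> + u)) z) (p + int L + 1)"
    using s u by (intro gate_busy_after_signal[OF w sig]) simp
  then show ?thesis
    using w u by (simp add: signal_gate_ca gate_window_def)
qed

lemma card_gate_signals_le:
  assumes "gate_window z a p L"
  shows "card {\<sigma>. \<sigma> < N \<and> signal ((gate_ca ^^ \<sigma>) z) (p + int L + 1)} \<le> N div (2 * L + 2) + 1"
proof (rule card_separated_le)
  fix \<sigma> s
  assume "signal ((gate_ca ^^ \<sigma>) z) (p + int L + 1)" "1 \<le> s" "s < 2 * L + 2"
  then show "\<not> signal ((gate_ca ^^ (\<sigma> + s)) z) (p + int L + 1)"
    by (intro gate_signals_separated[OF assms]) auto
qed simp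

lemma signal_left_of_silent_cell:
  assumes silent: "\<forall>t. t0 \<le> t \<and> t < n \<longrightarrow> \<not> signal ((gate_ca ^^ t) z) e"
    and "i < e" "t0 + nat (e - i) \<le> t" "t \<le> n"
  shows "\<not> signal ((gate_ca ^^ t) z) i"
proof
  define k where "k = nat (e - i)"
  assume "signal ((gate_ca ^^ t) z) i"
  then have "signal ((gate_ca ^^ (t - k)) z) (i + int k)"
    using signal_iterate_imp[of "t - k" k z i] assms(3) by (simp add: k_def)
  moreover have "i + int k = e" "t0 \<le> t - k" "t - k < n"
    using assms(2-4) by (auto simp: k_def)
  ultimately show False
    using silent by auto
qed

(* Markers cannot enter [a, p] from the left since terrain a \<noteq> 1, so once no signal
   has entered at p + 1 for 2 (p - a) + 2 steps the window is empty. *)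
lemma window_clear_after_silence:
  assumes a: "terrain z a \<noteq> 1" "a \<le> p" and D: "D = 2 * nat (p - a) + 2" "D \<le> n"
    and silent: "\<forall>t. n - D \<le> t \<and> t < n \<longrightarrow> \<not> signal ((gate_ca ^^ t) z) (p + 1)"
    and j: "a \<le> j" "j \<le> p"
  shows "\<not> signal ((gate_ca ^^ n) z) j \<and> \<not> marker ((gate_ca ^^ n) z) j"
proof -
  have no_marker: "\<not> marker ((gate_ca ^^ t) z) (a + int d)"
    if "a + int d \<le> p" "n - D + nat (p + 1 - a) + d + 1 \<le> t" "t \<le> n" for d t
    using that
  proof (induction d arbitrary: t)
    case 0
    then obtain t' where "t = Suc t'"
      by (cases t) auto
    then show ?case
      using a(1) by (simp add: marker_gate_ca)
  next
    case (Suc d)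
    then obtain t' where t: "t = Suc t'"
      by (cases t) auto
    have "\<not> marker ((gate_ca ^^ t') z) (a + int d)"
      using Suc t by auto
    moreover have "\<not> signal ((gate_ca ^^ t') z) (a + int (Suc d))"
      by (rule signal_left_of_silent_cell[OF silent]) (use Suc.prems t in auto)
    ultimately show ?case
      using t by (simp add: marker_gate_ca algebra_simps)
  qed
  have "\<not> marker ((gate_ca ^^ n) z) (a + int (nat (j - a)))"
    by (rule no_marker) (use j D in auto)
  moreover have "\<not> signal ((gate_ca ^^ n) z) j"
    by (rule signal_left_of_silent_cell[OF silent]) (use j D in auto)
  ultimately show ?thesis
    using j by simp
qed

lemma gate_ca_iterate_blank:
  assumes "1 \<le> n" "\<not> signal ((gate_ca ^^ n) z) j" "\<not> marker ((gate_ca ^^ n) z) j"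
  shows "(gate_ca ^^ n) z j = cell (terrain z j) False False"
proof -
  obtain n' where "n = Suc n'"
    using assms(1) by (cases n) auto
  then show ?thesis
    using assms gate_ca_eq_cell[of "(gate_ca ^^ n') z" j] by simp
qed

lemma window_blank_if_gate_silent:
  assumes w: "gate_window z a p L" and D: "D = 2 * nat (p - a) + 2" "L + D \<le> n"
    and silent: "\<forall>\<sigma>. \<sigma> + L + 1 \<le> n \<and> n \<le> \<sigma> + L + D \<longrightarrow> \<not> signal ((gate_ca ^^ \<sigma>) z) (p + int L + 1)"
    and j: "a \<le> j" "j \<le> p"
  shows "(gate_ca ^^ n) z j = cell (terrain z j) False False"
proof -
  have "\<not> signal ((gate_ca ^^ t) z) (p + 1)" if "n - D \<le> t" "t < n" for t
    using signal_enters_window[OF w order_refl, of "t - L"] silent[rule_format, of "t - L"] that D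
    by (simp add: algebra_simps)
  then have "\<not> signal ((gate_ca ^^ n) z) j \<and> \<not> marker ((gate_ca ^^ n) z) j"
    using w D j by (intro window_clear_after_silence[of z a p D]) (auto simp: gate_window_def)
  then show ?thesis
    using D by (intro gate_ca_iterate_blank) auto
qed

lemma iterates_agree_if_gates_silent:
  assumes wx: "gate_window x a p L" and wy: "gate_window y a p L"
    and same: "\<forall>j. a \<le> j \<and> j \<le> p \<longrightarrow> terrain y j = terrain x j"
    and k: "a \<le> - int k" "int k \<le> p" and D: "D = 2 * nat (p - a) + 2" "L + D \<le> n"
    and silent: "\<forall>\<sigma>. \<sigma> + L + 1 \<le> n \<and> n \<le> \<sigma> + L + D
      \<longrightarrow> \<not> signal ((gate_ca ^^ \<sigma>) x) (p + int L + 1) \<and> \<not> signal ((gate_ca ^^ \<sigma>) y) (p + int L + 1)"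
    and j: "\<bar>j\<bar> \<le> int k"
  shows "(gate_ca ^^ n) x j = (gate_ca ^^ n) y j"
proof -
  have "a \<le> j" "j \<le> p"
    using j k by auto
  then show ?thesis
    using window_blank_if_gate_silent[OF wx D] window_blank_if_gate_silent[OF wy D] silent same
    by simp
qed

lemma card_disagreement_times_le:
  assumes wx: "gate_window x a p L" and wy: "gate_window y a p L"
    and same: "\<forall>j. a \<le> j \<and> j \<le> p \<longrightarrow> terrain y j = terrain x j"
    and k: "a \<le> - int k" "int k \<le> p" and D: "D = 2 * nat (p - a) + 2"
  shows "card {n \<in> {1..N}. \<exists>j. \<bar>j\<bar> \<le> int k \<and> (gate_ca ^^ n) x j \<noteq> (gate_ca ^^ n) y j}
    \<le> L + D + 2 * (N div (2 * L + 2) + 1) * D"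
proof -
  let ?q = "p + int L + 1"
  let ?bad = "{n \<in> {1..N}. \<exists>j. \<bar>j\<bar> \<le> int k \<and> (gate_ca ^^ n) x j \<noteq> (gate_ca ^^ n) y j}"
  define H where "H = {\<sigma>. \<sigma> < N \<and> signal ((gate_ca ^^ \<sigma>) x) ?q} \<union> {\<sigma>. \<sigma> < N \<and> signal ((gate_ca ^^ \<sigma>) y) ?q}"
  have "?bad \<subseteq> {..<L + D} \<union> (\<Union>\<sigma>\<in>H. {\<sigma> + L + 1..\<sigma> + L + D})"
  proof
    fix n
    assume n: "n \<in> ?bad"
    show "n \<in> {..<L + D} \<union> (\<Union>\<sigma>\<in>H. {\<sigma> + L + 1..\<sigma> + L + D})"
    proof (rule ccontr)
      assume "n \<notin> {..<L + D} \<union> (\<Union>\<sigma>\<in>H. {\<sigma> + L + 1..\<sigma> + L + D})"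
      moreover have "\<sigma> < N" if "\<sigma> + L + 1 \<le> n" for \<sigma>
        using that n by auto
      ultimately have "L + D \<le> n" and "\<forall>\<sigma>. \<sigma> + L + 1 \<le> n \<and> n \<le> \<sigma> + L + D
          \<longrightarrow> \<not> signal ((gate_ca ^^ \<sigma>) x) ?q \<and> \<not> signal ((gate_ca ^^ \<sigma>) y) ?q"
        unfolding H_def by auto
      then show False
        using n iterates_agree_if_gates_silent[OF wx wy same k D] by auto
    qed
  qed
  then have "card ?bad \<le> card ({..<L + D} \<union> (\<Union>\<sigma>\<in>H. {\<sigma> + L + 1..\<sigma> + L + D}))"
    by (rule card_mono[rotated]) (simp add: H_def)
  also have "\<dots> \<le> card {..<L + D} + card (\<Union>\<sigma>\<in>H. {\<sigma> + L + 1..\<sigma> + L + D})"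
    by (rule card_Un_le)
  also have "\<dots> \<le> L + D + card H * D"
    using card_UN_le[of H "\<lambda>\<sigma>. {\<sigma> + L + 1..\<sigma> + L + D}"] by (simp add: H_def)
  finally have bad_le: "card ?bad \<le> L + D + card H * D" .
  have "card H \<le> card {\<sigma>. \<sigma> < N \<and> signal ((gate_ca ^^ \<sigma>) x) ?q}
      + card {\<sigma>. \<sigma> < N \<and> signal ((gate_ca ^^ \<sigma>) y) ?q}"
    unfolding H_def by (rule card_Un_le)
  also have "\<dots> \<le> 2 * (N div (2 * L + 2) + 1)"
    using add_mono[OF card_gate_signals_le[OF wx, of N] card_gate_signals_le[OF wy, of N]] by simp
  finally have "card H * D \<le> 2 * (N div (2 * L + 2) + 1) * D"
    by (rule mult_le_mono1)
  then show ?thesis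
    using bad_le by linarith
qed

lemma gate_ca_mean_dist_le:
  assumes wx: "gate_window x a p L" and wy: "gate_window y a p L"
    and same: "\<forall>j. a \<le> j \<and> j \<le> p \<longrightarrow> terrain y j = terrain x j"
    and k: "a \<le> - int k" "int k \<le> p" and D: "D = 2 * nat (p - a) + 2" and N: "1 \<le> N"
  shows "(1 / real N) * (\<Sum>i=1..N. cfg_dist ((gate_ca ^^ i) x) ((gate_ca ^^ i) y))
    \<le> (1/2)^k + real D / real (L + 1) + real (L + 3 * D) / real N"
proof -
  let ?bad = "{n \<in> {1..N}. \<exists>j. \<bar>j\<bar> \<le> int k \<and> (gate_ca ^^ n) x j \<noteq> (gate_ca ^^ n) y j}"
  have sum_le: "(\<Sum>i=1..N. cfg_dist ((gate_ca ^^ i) x) ((gate_ca ^^ i) y))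
      \<le> real N * (1/2)^k + real (card ?bad)"
    by (rule sum_cfg_dist_le)
  have "real (card ?bad) \<le> real (L + D + 2 * (N div (2 * L + 2) + 1) * D)"
    using card_disagreement_times_le[OF wx wy same k D, of N] unfolding of_nat_le_iff .
  also have "\<dots> = real (L + 3 * D) + 2 * real D * real (N div (2 * L + 2))"
    by (simp add: algebra_simps)
  also have "\<dots> \<le> real (L + 3 * D) + 2 * real D * (real N / real (2 * L + 2))"
    by (intro add_left_mono mult_left_mono of_nat_div_le_of_nat) simp
  also have "\<dots> = real (L + 3 * D) + real N * (real D / real (L + 1))"
    by (simp add: field_simps)
  finally have "(\<Sum>i=1..N. cfg_dist ((gate_ca ^^ i) x) ((gate_ca ^^ i) y))
      \<le> real N * ((1/2)^k + real D / real (L + 1)) + real (L + 3 * D)"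
    using sum_le unfolding distrib_left by linarith
  then have "(1 / real N) * (\<Sum>i=1..N. cfg_dist ((gate_ca ^^ i) x) ((gate_ca ^^ i) y))
      \<le> (1 / real N) * (real N * ((1/2)^k + real D / real (L + 1)) + real (L + 3 * D))"
    by (rule mult_left_mono) simp
  also have "\<dots> = (1/2)^k + real D / real (L + 1) + real (L + 3 * D) / real N"
    using N by (simp add: field_simps)
  finally show ?thesis .
qed

section \<open>Mean equicontinuity on a residual set\<close>

(* The bound on L makes the gate admit signals so rarely that the window [a, p], which
   contains [-k, k], is disturbed during a fraction of at most about 2/k of the time. *)
definition gate_filtered :: "nat \<Rightarrow> (int \<Rightarrow> nat) set" where
  "gate_filtered k = {x \<in> full_shift gate_alphabet. \<exists>a p L.
     a \<le> - int k \<and> int k \<le> p \<and> k * (nat (p - a) + 1) \<le> L \<and> gate_window x a p L}"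

lemma gate_window_near:
  assumes w: "gate_window x a p L"
    and close: "y \<in> ball_in X cfg_dist x ((1/2)^nat (max (- a) (p + int L + 1)))"
  shows "gate_window y a p L" "\<forall>j. a \<le> j \<and> j \<le> p \<longrightarrow> terrain y j = terrain x j"
proof -
  have "terrain y j = terrain x j" if "a \<le> j" "j \<le> p + int L + 1" for j
  proof -
    have "\<bar>j\<bar> \<le> int (nat (max (- a) (p + int L + 1)))"
      using that by auto
    then show ?thesis
      using close by (simp add: mem_ball_in_cfg_dist_iff terrain_def)
  qed
  then show "gate_window y a p L" "\<forall>j. a \<le> j \<and> j \<le> p \<longrightarrow> terrain y j = terrain x j"
    using w gate_window_cong[of a p L y x] by (auto simp: gate_window_def)
qed

lemma open_in_sp_gate_filtered: "open_in_sp (full_shift gate_alphabet) cfg_dist (gate_filtered k)"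
  unfolding open_in_sp_def
proof (intro conjI ballI)
  fix x
  assume "x \<in> gate_filtered k"
  then obtain a p L where "a \<le> - int k" "int k \<le> p" "k * (nat (p - a) + 1) \<le> L" "gate_window x a p L"
    unfolding gate_filtered_def by blast
  then show "\<exists>r>0. ball_in (full_shift gate_alphabet) cfg_dist x r \<subseteq> gate_filtered k"
    using gate_window_near(1)
    by (intro exI[of _ "(1/2)^nat (max (- a) (p + int L + 1))"])
      (force simp: gate_filtered_def ball_in_def)
qed (auto simp: gate_filtered_def)

lemma dense_in_sp_gate_filtered: "dense_in_sp (full_shift gate_alphabet) cfg_dist (gate_filtered k)"
  unfolding dense_in_sp_def
proof (intro ballI allI impI)
  fix x and r :: real
  assume x: "x \<in> full_shift gate_alphabet" and "0 < r"
  then obtain M where "k < M" and M: "ball_in (full_shift gate_alphabet) cfg_dist x ((1/2)^M)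
      \<subseteq> ball_in (full_shift gate_alphabet) cfg_dist x r"
    using cylinder_subset_ball_in by blast
  define a where "a = - int M - 1"
  define p where "p = int M + 1"
  define L where "L = k * (nat (p - a) + 1) + 2"
  define x' where "x' i = (if \<bar>i\<bar> \<le> int M then x i else if p < i \<and> i \<le> p + int L then 1
      else if i = p + int L + 1 then 2 else 0)" for i
  have "x' \<in> full_shift gate_alphabet"
    using x by (auto simp: full_shift_def x'_def)
  then have "x' \<in> ball_in (full_shift gate_alphabet) cfg_dist x r"
    using M by (auto simp: mem_ball_in_cfg_dist_iff x'_def)
  have "gate_window x' a p L"
    unfolding gate_window_def
  proof (intro conjI allI impI)
    show "a \<le> p" "2 \<le> L"
      by (simp_all add: a_def p_def L_def)
    show "terrain x' a \<noteq> 1" "terrain x' (p + int L + 1) = 2"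
      by (simp_all add: terrain_def x'_def a_def p_def)
    fix i
    assume "p < i \<and> i \<le> p + int L"
    then show "terrain x' i = 1"
      by (simp add: terrain_def x'_def p_def)
  qed
  moreover have "a \<le> - int k" "int k \<le> p" "k * (nat (p - a) + 1) \<le> L"
    using \<open>k < M\<close> by (simp_all add: a_def p_def L_def)
  ultimately have "x' \<in> gate_filtered k"
    using \<open>x' \<in> full_shift gate_alphabet\<close> unfolding gate_filtered_def by blast
  with \<open>x' \<in> ball_in (full_shift gate_alphabet) cfg_dist x r\<close>
  show "ball_in (full_shift gate_alphabet) cfg_dist x r \<inter> gate_filtered k \<noteq> {}"
    by blast
qed

lemma filter_ratio_bound:
  assumes "1 \<le> k" and "k * (nat (p - a) + 1) \<le> L"
  shows "(1/2::real)^k + real (2 * nat (p - a) + 2) / real (L + 1) \<le> 3 / real k"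
proof -
  have "real k * real (nat (p - a) + 1) \<le> real L"
    using assms(2) by (metis of_nat_le_iff of_nat_mult)
  then have "real (2 * nat (p - a) + 2) / real (L + 1) \<le> 2 / real k"
    using assms(1) by (simp add: field_simps)
  then show ?thesis
    using half_pow_le_inverse[OF assms(1)] by simp
qed

lemma mean_eq_point_if_gate_filtered:
  assumes x: "\<And>k. x \<in> gate_filtered (Suc k)"
  shows "mean_eq_point (full_shift gate_alphabet) cfg_dist gate_ca x"
  unfolding mean_eq_point_def
proof (intro allI impI)
  fix \<epsilon> :: real
  assume "0 < \<epsilon>"
  define k where "k = Suc (nat \<lceil>3 / \<epsilon>\<rceil>)"
  have "3 / \<epsilon> < real k" "0 < real k"
    unfolding k_def by linarith+
  then have k_small: "3 / real k < \<epsilon>"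
    using \<open>0 < \<epsilon>\<close> by (simp add: divide_less_eq mult.commute)
  obtain a p L where ak: "a \<le> - int k" "int k \<le> p" and L: "k * (nat (p - a) + 1) \<le> L"
    and w: "gate_window x a p L"
    using x[of "nat \<lceil>3 / \<epsilon>\<rceil>"] unfolding gate_filtered_def k_def by blast
  have bound: "(1/2)^k + real (2 * nat (p - a) + 2) / real (L + 1) \<le> 3 / real k"
    using L by (intro filter_ratio_bound) (simp_all add: k_def)
  show "\<exists>\<delta>>0. \<forall>y\<in>ball_in (full_shift gate_alphabet) cfg_dist x \<delta>.
      limsup (\<lambda>n. ereal (1 / real n * (\<Sum>i = 1..n. cfg_dist ((gate_ca ^^ i) x) ((gate_ca ^^ i) y))))
        < ereal \<epsilon>"
  proof (intro exI[of _ "(1/2)^nat (max (- a) (p + int L + 1))"] conjI ballI)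
    fix y
    assume "y \<in> ball_in (full_shift gate_alphabet) cfg_dist x ((1/2)^nat (max (- a) (p + int L + 1)))"
    note near = gate_window_near[OF w this]
    have "limsup (\<lambda>n. ereal (1 / real n * (\<Sum>i = 1..n. cfg_dist ((gate_ca ^^ i) x) ((gate_ca ^^ i) y))))
        \<le> ereal (3 / real k)"
      using gate_ca_mean_dist_le[OF w near ak refl] bound
      by (intro limsup_le_const_plus_over_n[of _ _ "real (L + 3 * (2 * nat (p - a) + 2))"]) force
    also have "\<dots> < ereal \<epsilon>"
      using k_small by simp
    finally show "limsup (\<lambda>n. ereal (1 / real n * (\<Sum>i = 1..n. cfg_dist ((gate_ca ^^ i) x) ((gate_ca ^^ i) y))))
        < ereal \<epsilon>" .
  qed simp
qed

lemma almost_mean_eq_gate_ca: "almost_mean_eq (full_shift gate_alphabet) cfg_dist gate_ca"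
proof -
  have "(\<Inter>k. gate_filtered (Suc k))
      \<subseteq> {x \<in> full_shift gate_alphabet. mean_eq_point (full_shift gate_alphabet) cfg_dist gate_ca x}"
  proof
    fix x
    assume "x \<in> (\<Inter>k. gate_filtered (Suc k))"
    then have filtered: "x \<in> gate_filtered (Suc k)" for k
      by simp
    then have "x \<in> full_shift gate_alphabet"
      by (simp add: gate_filtered_def)
    then show "x \<in> {x \<in> full_shift gate_alphabet. mean_eq_point (full_shift gate_alphabet) cfg_dist gate_ca x}"
      using mean_eq_point_if_gate_filtered[OF filtered] by simp
  qed
  then show ?thesis
    unfolding almost_mean_eq_def residual_in_def
    using open_in_sp_gate_filtered dense_in_sp_gate_filtered
    by (intro exI[of _ "\<lambda>k. gate_filtered (Suc k)"]) simp
qed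

lemma not_almost_diam_mean_eq_gate_ca: "\<not> almost_diam_mean_eq (full_shift gate_alphabet) cfg_dist gate_ca"
proof
  assume "almost_diam_mean_eq (full_shift gate_alphabet) cfg_dist gate_ca"
  then have "residual_in (full_shift gate_alphabet) cfg_dist
      {x \<in> full_shift gate_alphabet. diam_mean_eq_point (full_shift gate_alphabet) cfg_dist gate_ca x}"
    by (simp only: almost_diam_mean_eq_def)
  moreover have "gate_alphabet \<noteq> {}"
    by (simp add: lessThan_empty_iff)
  ultimately obtain x where "x \<in> full_shift gate_alphabet"
    "x \<in> {x \<in> full_shift gate_alphabet. diam_mean_eq_point (full_shift gate_alphabet) cfg_dist gate_ca x}"
    using residual_in_full_shift_nonempty by blast
  then show False
    using not_diam_mean_eq_point_gate_ca by simp
qed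

theorem mainTheorem3:
  shows "\<exists>(A :: nat set) T. cellular_automaton A T
           \<and> almost_mean_eq (full_shift A) cfg_dist T
           \<and> \<not> almost_diam_mean_eq (full_shift A) cfg_dist T"
  using cellular_automaton_gate_ca almost_mean_eq_gate_ca not_almost_diam_mean_eq_gate_ca by blast

end
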